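(* Let $k$ be a field and let $\nu$ be the valuation on $k[x,y]$ given by $\nu(p)=\operatorname{ord}_t\, p\!\left(t,\sum_{i=1}^\infty t^{i^2}\right)$, the $t$-adic order of the power series obtained by substituting $x\mapsto t$, $y\mapsto t+t^4+t^9+t^{16}+\cdots$. Then $\nu$ is centered on $k[x,y]$, the set $\mathbf{Q}=\{x\}$ satisfies (GS3), but $\mathbf{Q}=\{x\}$ does not satisfy (GS2). In particular, the converse of the implication (GS2) $\Rightarrow$ (GS3) fails in general.
   Context: The substitution homomorphism $k[x,y]\to k[[t]]$, $x\mapsto t$, $y\mapsto\sum_{i\ge1}t^{i^2}$, is injective (the series is transcendental over $k(t)$), so $\nu$ is a valuation with $\nu(k^\times)=0$ and $\nu(t)=1$. For a valuation $\nu$ on a ring $R$ with values in $\Gamma\cup\{\infty\}$: $\nu(R)$ is its set of finite values; for $\gamma\in\nu(R)$, $\mathcal P_\gamma=\{f\mid\nu(f)\ge\gamma\}$, $\mathcal P_\gamma^+=\{f\mid\nu(f)>\gamma\}$; $\mathrm{gr}_\nu(R)=\bigoplus_{\gamma}\mathcal P_\gamma/\mathcal P_\gamma^+$ with multiplication induced by that of $R$; $\mathrm{in}_\nu(f)$ is the image of $f$ in $\mathcal P_{\nu(f)}/\mathcal P_{\nu(f)}^+$. $\nu$ is centered if $\nu\ge0$ on $R$; then $\mathfrak m=\{\nu>0\}$ and $\mathrm{gr}_\nu(R)$ is an $R/\mathfrak m$-algebra. For $\mathbf{Q}\subseteq R$, $\mathbf{Q}^\lambda=\prod Q^{\lambda(Q)}$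 for finitely supported $\lambda:\mathbf{Q}\to\mathbb{N}_0$. (GS2): for every $\gamma\in\nu(R)$ the ideal $\mathcal P_\gamma$ is generated by $\{\mathbf{Q}^\lambda\mid\nu(\mathbf{Q}^\lambda)\ge\gamma\}$. (GS3): $\{\mathrm{in}_\nu(Q)\mid Q\in\mathbf{Q}\}$ generates $\mathrm{gr}_\nu(R)$ as an $R/\mathfrak m$-algebra. *)

theory Defs
  imports "HOL-Computational_Algebra.Computational_Algebra" "HOL-Library.Extended_Real"
begin

text \<open>k[x,y] is rendered as ('a poly) poly: the inner variable is x, the outer variable is y.\<close>

definition sq_series :: "'a::field fps" where
  "sq_series = Abs_fps (\<lambda>n. if 0 < n \<and> (\<exists>i::nat. n = i^2) then 1 else 0)"

definition subst_xy :: "'a::field poly poly \<Rightarrow> 'a fps" where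
  "subst_xy p = poly (map_poly fps_of_poly p) sq_series"

definition nu :: "'a::field poly poly \<Rightarrow> ereal" where
  "nu p = (if subst_xy p = 0 then \<infinity> else ereal (real (subdegree (subst_xy p))))"

abbreviation var_x :: "'a::field poly poly" where
  "var_x \<equiv> [:[:0, 1:]:]"

definition valuation :: "('r::comm_ring_1 \<Rightarrow> ereal) \<Rightarrow> bool" where
  "valuation v \<longleftrightarrow> v 0 = \<infinity> \<and> v 1 = 0 \<and> (\<forall>f. v f \<noteq> -\<infinity>) \<and>
     (\<forall>f g. v (f * g) = v f + v g) \<and> (\<forall>f g. min (v f) (v g) \<le> v (f + g))"

definition centered :: "('r::comm_ring_1 \<Rightarrow> ereal) \<Rightarrow> bool" where
  "centered v \<longleftrightarrow> (\<forall>f. 0 \<le> v f)"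

definition vals :: "('r \<Rightarrow> ereal) \<Rightarrow> ereal set" where
  "vals v = {\<gamma>. \<exists>f. v f = \<gamma> \<and> \<gamma> \<noteq> \<infinity>}"

definition Pge :: "('r \<Rightarrow> ereal) \<Rightarrow> ereal \<Rightarrow> 'r set" where
  "Pge v \<gamma> = {f. \<gamma> \<le> v f}"

definition Pgt :: "('r \<Rightarrow> ereal) \<Rightarrow> ereal \<Rightarrow> 'r set" where
  "Pgt v \<gamma> = {f. \<gamma> < v f}"

definition gen_ideal :: "'r::comm_ring_1 set \<Rightarrow> 'r set" where
  "gen_ideal S = {x. \<exists>F c. finite F \<and> F \<subseteq> S \<and> x = (\<Sum>s\<in>F. c s * s)}"

definition Qmonomials :: "'r::comm_ring_1 set \<Rightarrow> 'r set" where
  "Qmonomials Q = {(\<Prod>q\<in>{q. lam q \<noteq> 0}. q ^ lam q) | lam :: 'r \<Rightarrow> nat.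
               finite {q. lam q \<noteq> 0} \<and> {q. lam q \<noteq> 0} \<subseteq> Q}"

definition GS2 :: "('r::comm_ring_1 \<Rightarrow> ereal) \<Rightarrow> 'r set \<Rightarrow> bool" where
  "GS2 v Q \<longleftrightarrow> (\<forall>\<gamma>\<in>vals v. Pge v \<gamma> = gen_ideal {m \<in> Qmonomials Q. \<gamma> \<le> v m})"

text \<open>An element of gr_v(R) = \<Oplus>_{\<gamma>\<in>v(R)} P_\<gamma>/P_\<gamma>^+ is a function assigning to each
  \<gamma> \<in> v(R) a coset f + P_\<gamma>^+ with f \<in> P_\<gamma> (and {} outside v(R)), almost all components zero.\<close>

definition cls :: "('r::comm_ring_1 \<Rightarrow> ereal) \<Rightarrow> ereal \<Rightarrow> 'r \<Rightarrow> 'r set" where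
  "cls v \<gamma> f = (\<lambda>g. f + g) ` Pgt v \<gamma>"

definition gr_comp :: "('r::comm_ring_1 \<Rightarrow> ereal) \<Rightarrow> ereal \<Rightarrow> 'r set set" where
  "gr_comp v \<gamma> = cls v \<gamma> ` Pge v \<gamma>"

definition gr_supp :: "('r::comm_ring_1 \<Rightarrow> ereal) \<Rightarrow> (ereal \<Rightarrow> 'r set) \<Rightarrow> ereal set" where
  "gr_supp v G = {\<gamma> \<in> vals v. G \<gamma> \<noteq> Pgt v \<gamma>}"

definition gr_carrier :: "('r::comm_ring_1 \<Rightarrow> ereal) \<Rightarrow> (ereal \<Rightarrow> 'r set) set" where
  "gr_carrier v = {G. (\<forall>\<gamma>\<in>vals v. G \<gamma> \<in> gr_comp v \<gamma>) \<and> (\<forall>\<gamma>. \<gamma> \<notin> vals v \<longrightarrow> G \<gamma> = {})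
                     \<and> finite (gr_supp v G)}"

definition rep :: "'r set \<Rightarrow> 'r" where
  "rep A = (SOME a. a \<in> A)"

definition gr_add :: "('r::comm_ring_1 \<Rightarrow> ereal) \<Rightarrow> (ereal \<Rightarrow> 'r set) \<Rightarrow> (ereal \<Rightarrow> 'r set) \<Rightarrow> (ereal \<Rightarrow> 'r set)" where
  "gr_add v G H = (\<lambda>\<gamma>. if \<gamma> \<in> vals v then cls v \<gamma> (rep (G \<gamma>) + rep (H \<gamma>)) else {})"

definition gr_mult :: "('r::comm_ring_1 \<Rightarrow> ereal) \<Rightarrow> (ereal \<Rightarrow> 'r set) \<Rightarrow> (ereal \<Rightarrow> 'r set) \<Rightarrow> (ereal \<Rightarrow> 'r set)" where
  "gr_mult v G H = (\<lambda>\<gamma>. if \<gamma> \<in> vals v then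
      cls v \<gamma> (\<Sum>(\<alpha>, \<beta>) \<in> {(\<alpha>, \<beta>). \<alpha> \<in> gr_supp v G \<and> \<beta> \<in> gr_supp v H \<and> \<alpha> + \<beta> = \<gamma>}.
                  rep (G \<alpha>) * rep (H \<beta>))
    else {})"

text \<open>Scalar action of R (it factors through R/m when v is centered).\<close>
definition gr_smult :: "('r::comm_ring_1 \<Rightarrow> ereal) \<Rightarrow> 'r \<Rightarrow> (ereal \<Rightarrow> 'r set) \<Rightarrow> (ereal \<Rightarrow> 'r set)" where
  "gr_smult v c G = (\<lambda>\<gamma>. if \<gamma> \<in> vals v then cls v \<gamma> (c * rep (G \<gamma>)) else {})"

definition gr_one :: "('r::comm_ring_1 \<Rightarrow> ereal) \<Rightarrow> (ereal \<Rightarrow> 'r set)" where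
  "gr_one v = (\<lambda>\<gamma>. if \<gamma> \<in> vals v then cls v \<gamma> (if \<gamma> = 0 then 1 else 0) else {})"

text \<open>Initial form in_v(f): the class of f in P_{v f}/P_{v f}^+ (zero if f has value \<infinity>).\<close>
definition in_v :: "('r::comm_ring_1 \<Rightarrow> ereal) \<Rightarrow> 'r \<Rightarrow> (ereal \<Rightarrow> 'r set)" where
  "in_v v f = (\<lambda>\<gamma>. if \<gamma> \<in> vals v then cls v \<gamma> (if \<gamma> = v f then f else 0) else {})"

text \<open>Subalgebra of gr_v(R) generated (over R/m, i.e. via the R-action) by a set S.\<close>
inductive_set gen_alg :: "('r::comm_ring_1 \<Rightarrow> ereal) \<Rightarrow> (ereal \<Rightarrow> 'r set) set \<Rightarrow> (ereal \<Rightarrow> 'r set) set"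
  for v S where
  one: "gr_one v \<in> gen_alg v S"
| gen: "G \<in> S \<Longrightarrow> G \<in> gen_alg v S"
| smult: "G \<in> gen_alg v S \<Longrightarrow> gr_smult v c G \<in> gen_alg v S"
| add: "G \<in> gen_alg v S \<Longrightarrow> H \<in> gen_alg v S \<Longrightarrow> gr_add v G H \<in> gen_alg v S"
| mult: "G \<in> gen_alg v S \<Longrightarrow> H \<in> gen_alg v S \<Longrightarrow> gr_mult v G H \<in> gen_alg v S"

definition GS3 :: "('r::comm_ring_1 \<Rightarrow> ereal) \<Rightarrow> 'r set \<Rightarrow> bool" where
  "GS3 v Q \<longleftrightarrow> gr_carrier v \<subseteq> gen_alg v (in_v v ` Q)"

end

theory Submission
  imports Defs
begin

text \<open>
  Every value of \<open>\<nu>\<close> is a natural number, and \<open>\<nu>(x\<^sup>n) = n\<close>. If \<open>\<nu>(f) \<ge> n\<close> and \<open>c\<close> is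
  the coefficient of \<open>t\<^sup>n\<close> in \<open>f(t, \<Sum>\<^sub>i t\<^bsup>i\<^sup>2\<^esup>)\<close>, then \<open>\<nu>(f - c x\<^sup>n) > n\<close>; so the
  graded piece of degree \<open>n\<close> is spanned by \<open>in(x)\<^sup>n\<close>, and since initial forms are
  multiplicative and every element of \<open>gr_\<nu>\<close> is a finite sum of homogeneous ones,
  \<open>in(x)\<close> generates \<open>gr_\<nu>\<close>. On the other hand \<open>y - x \<mapsto> t\<^sup>4 + t\<^sup>9 + \<dots>\<close> has value
  at least 2, whereas the monomials in \<open>x\<close> of value at least 2 are the \<open>x\<^sup>k\<close> with \<open>k \<ge> 2\<close>, so the
  ideal they generate consists of multiples of \<open>x\<close> and misses \<open>y - x\<close>.
\<close>

section \<open>Homogeneous elements of the graded algebra of a valuation\<close>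

definition gr_homog :: "('r::comm_ring_1 \<Rightarrow> ereal) \<Rightarrow> ereal \<Rightarrow> 'r \<Rightarrow> ereal \<Rightarrow> 'r set" where
  "gr_homog v \<gamma> f = (\<lambda>\<delta>. if \<delta> \<in> vals v then cls v \<delta> (if \<delta> = \<gamma> then f else 0) else {})"

lemma in_v_eq_gr_homog: "in_v v f = gr_homog v (v f) f"
  by (simp add: in_v_def gr_homog_def)

lemma gr_one_eq_gr_homog: "gr_one v = gr_homog v 0 1"
  by (simp add: gr_one_def gr_homog_def)

lemma cls_0: "cls v \<gamma> 0 = Pgt v \<gamma>"
  by (simp add: cls_def)

lemma vals_ne_infinity: "\<gamma> \<in> vals v \<Longrightarrow> \<gamma> \<noteq> \<infinity>"
  by (simp add: vals_def)

context
  fixes v :: "'r::comm_ring_1 \<Rightarrow> ereal"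
  assumes val: "valuation v"
begin

lemma valuation_ne_minf: "v f \<noteq> -\<infinity>"
  using val by (simp add: valuation_def)

lemma valuation_mult: "v (f * g) = v f + v g"
  using val by (simp add: valuation_def)

lemma valuation_minus_one: "v (- 1) = 0"
proof -
  have "v (- 1) + v (- 1) = 0"
    using val valuation_mult[of "- 1" "- 1"] by (simp add: valuation_def)
  then show ?thesis
    using valuation_ne_minf[of "- 1"] by (cases "v (- 1)") auto
qed

lemma valuation_uminus: "v (- f) = v f"
  using valuation_mult[of "- 1" f] valuation_minus_one by simp

lemma zero_mem_Pgt: "\<gamma> \<noteq> \<infinity> \<Longrightarrow> 0 \<in> Pgt v \<gamma>"
  using val by (simp add: Pgt_def valuation_def less_top[symmetric])

lemma add_mem_Pgt: "f \<in> Pgt v \<gamma> \<Longrightarrow> g \<in> Pgt v \<gamma> \<Longrightarrow> f + g \<in> Pgt v \<gamma>"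
  using val unfolding Pgt_def valuation_def by (auto intro: less_le_trans[of _ "min (v f) (v g)"])

lemma diff_mem_Pgt: "f \<in> Pgt v \<gamma> \<Longrightarrow> g \<in> Pgt v \<gamma> \<Longrightarrow> f - g \<in> Pgt v \<gamma>"
  using add_mem_Pgt[of f \<gamma> "- g"] by (simp add: Pgt_def valuation_uminus)

lemma add_mem_Pge: "f \<in> Pge v \<gamma> \<Longrightarrow> g \<in> Pge v \<gamma> \<Longrightarrow> f + g \<in> Pge v \<gamma>"
  using val unfolding Pge_def valuation_def by (auto intro: order_trans[of _ "min (v f) (v g)"])

lemma mult_mem_Pgt:
  assumes "\<bar>\<alpha>\<bar> \<noteq> \<infinity>" "f \<in> Pge v \<alpha>" "g \<in> Pgt v \<beta>"
  shows "f * g \<in> Pgt v (\<alpha> + \<beta>)"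
proof -
  have "\<alpha> + \<beta> < \<alpha> + v g"
    using assms by (simp add: Pgt_def ereal_less_add)
  also have "\<dots> \<le> v f + v g"
    using assms(2) by (simp add: Pge_def add_right_mono)
  finally show ?thesis
    by (simp add: Pgt_def valuation_mult)
qed

lemma cls_eq_iff:
  assumes "\<gamma> \<noteq> \<infinity>"
  shows "cls v \<gamma> a = cls v \<gamma> b \<longleftrightarrow> a - b \<in> Pgt v \<gamma>"
proof
  assume "cls v \<gamma> a = cls v \<gamma> b"
  moreover have "a \<in> cls v \<gamma> a"
    using zero_mem_Pgt[OF assms] unfolding cls_def by force
  ultimately show "a - b \<in> Pgt v \<gamma>"
    by (auto simp: cls_def)
next
  have shift: "cls v \<gamma> a \<subseteq> cls v \<gamma> b" if "a - b \<in> Pgt v \<gamma>" for a b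
  proof
    fix x assume "x \<in> cls v \<gamma> a"
    then obtain g where "g \<in> Pgt v \<gamma>" "x = b + ((a - b) + g)"
      by (auto simp: cls_def)
    with that show "x \<in> cls v \<gamma> b"
      unfolding cls_def by (blast intro: add_mem_Pgt)
  qed
  assume "a - b \<in> Pgt v \<gamma>"
  moreover from this have "b - a \<in> Pgt v \<gamma>"
    using diff_mem_Pgt[OF zero_mem_Pgt[OF assms]] by fastforce
  ultimately show "cls v \<gamma> a = cls v \<gamma> b"
    by (intro equalityI shift)
qed

lemma cls_eq_Pgt_iff: "\<gamma> \<noteq> \<infinity> \<Longrightarrow> cls v \<gamma> a = Pgt v \<gamma> \<longleftrightarrow> a \<in> Pgt v \<gamma>"
  using cls_eq_iff[of \<gamma> a 0] by (simp add: cls_0)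

lemma rep_cls_diff: "\<gamma> \<noteq> \<infinity> \<Longrightarrow> rep (cls v \<gamma> a) - a \<in> Pgt v \<gamma>"
  using someI[of "\<lambda>x. x \<in> cls v \<gamma> a" a] zero_mem_Pgt
  unfolding rep_def by (force simp: cls_def)

lemma gr_homog_cong: "f - g \<in> Pgt v \<gamma> \<Longrightarrow> gr_homog v \<gamma> f = gr_homog v \<gamma> g"
  by (rule ext) (auto simp: gr_homog_def cls_eq_iff vals_ne_infinity zero_mem_Pgt)

lemma gr_add_apply:
  assumes "\<gamma> \<in> vals v" "G \<gamma> = cls v \<gamma> a" "H \<gamma> = cls v \<gamma> b"
  shows "gr_add v G H \<gamma> = cls v \<gamma> (a + b)"
proof -
  have "(rep (G \<gamma>) - a) + (rep (H \<gamma>) - b) \<in> Pgt v \<gamma>"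
    using assms by (simp add: add_mem_Pgt rep_cls_diff vals_ne_infinity)
  then show ?thesis
    using assms(1) by (simp add: gr_add_def cls_eq_iff vals_ne_infinity algebra_simps)
qed

lemma gr_carrier_component:
  assumes "G \<in> gr_carrier v" "\<gamma> \<in> vals v"
  obtains g where "g \<in> Pge v \<gamma>" "G \<gamma> = cls v \<gamma> g"
  using assms unfolding gr_carrier_def gr_comp_def by blast

lemma gr_carrier_decompose:
  assumes G: "G \<in> gr_carrier v" and \<gamma>: "\<gamma> \<in> vals v" and g: "G \<gamma> = cls v \<gamma> g"
  shows "G = gr_add v (G(\<gamma> := Pgt v \<gamma>)) (gr_homog v \<gamma> g)"
proof
  fix \<delta>
  show "G \<delta> = gr_add v (G(\<gamma> := Pgt v \<gamma>)) (gr_homog v \<gamma> g) \<delta>"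
  proof (cases "\<delta> \<in> vals v")
    case False
    then show ?thesis
      using G by (simp add: gr_carrier_def gr_add_def)
  next
    case True
    then obtain a where a: "G \<delta> = cls v \<delta> (if \<delta> = \<gamma> then g else a)"
      using gr_carrier_component[OF G True] g by metis
    have "gr_add v (G(\<gamma> := Pgt v \<gamma>)) (gr_homog v \<gamma> g) \<delta>
        = cls v \<delta> ((if \<delta> = \<gamma> then 0 else a) + (if \<delta> = \<gamma> then g else 0))"
      using True a by (intro gr_add_apply) (auto simp: gr_homog_def cls_0)
    then show ?thesis
      using a by simp
  qed
qed

lemma gr_carrier_update:
  assumes G: "G \<in> gr_carrier v" and \<gamma>: "\<gamma> \<in> vals v"
  shows "G(\<gamma> := Pgt v \<gamma>) \<in> gr_carrier v" and "gr_supp v (G(\<gamma> := Pgt v \<gamma>)) = gr_supp v G - {\<gamma>}"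
proof -
  have "Pgt v \<gamma> \<in> gr_comp v \<gamma>"
    using val unfolding gr_comp_def by (force simp: Pge_def valuation_def cls_0[symmetric])
  moreover show supp: "gr_supp v (G(\<gamma> := Pgt v \<gamma>)) = gr_supp v G - {\<gamma>}"
    by (auto simp: gr_supp_def)
  ultimately show "G(\<gamma> := Pgt v \<gamma>) \<in> gr_carrier v"
    using G \<gamma> by (auto simp: gr_carrier_def supp)
qed

lemma gr_carrier_subset_gen_alg:
  assumes homog: "\<And>\<gamma> g. \<gamma> \<in> vals v \<Longrightarrow> g \<in> Pge v \<gamma> \<Longrightarrow> gr_homog v \<gamma> g \<in> gen_alg v S"
  shows "gr_carrier v \<subseteq> gen_alg v S"
proof
  fix G assume "G \<in> gr_carrier v"
  moreover obtain n where "card (gr_supp v G) = n" by blast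
  ultimately show "G \<in> gen_alg v S"
  proof (induction n arbitrary: G)
    case 0
    then have "gr_supp v G = {}"
      by (simp add: gr_carrier_def)
    then have "G = gr_homog v 0 0"
      using "0.prems"(1) by (auto simp: gr_carrier_def gr_supp_def gr_homog_def cls_0 fun_eq_iff)
    moreover have "0 \<in> vals v" "0 \<in> Pge v 0"
      using val by (auto simp: vals_def Pge_def valuation_def intro: exI[of _ 1])
    ultimately show ?case
      using homog by simp
  next
    case (Suc n)
    then obtain \<gamma> where \<gamma>: "\<gamma> \<in> gr_supp v G"
      by (metis card_eq_0_iff ex_in_conv nat.distinct(1))
    then have \<gamma>_val: "\<gamma> \<in> vals v"
      by (simp add: gr_supp_def)
    then obtain g where g: "g \<in> Pge v \<gamma>" "G \<gamma> = cls v \<gamma> g"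
      using Suc.prems(1) gr_carrier_component by blast
    have "finite (gr_supp v G)"
      using Suc.prems(1) by (simp add: gr_carrier_def)
    then have "card (gr_supp v (G(\<gamma> := Pgt v \<gamma>))) = n"
      using Suc.prems(2) \<gamma> by (simp add: gr_carrier_update(2)[OF Suc.prems(1) \<gamma>_val])
    then have "G(\<gamma> := Pgt v \<gamma>) \<in> gen_alg v S"
      using Suc.IH gr_carrier_update(1)[OF Suc.prems(1) \<gamma>_val] by blast
    then show ?case
      using gen_alg.add homog[OF \<gamma>_val g(1)]
        gr_carrier_decompose[OF Suc.prems(1) \<gamma>_val g(2)] by metis
  qed
qed

lemma gr_supp_in_v:
  assumes "v f \<noteq> \<infinity>"
  shows "gr_supp v (in_v v f) = {v f}"
proof -
  have "v f \<in> vals v" "f \<notin> Pgt v (v f)"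
    using assms by (auto simp: vals_def Pgt_def)
  then show ?thesis
    by (auto simp: gr_supp_def in_v_def cls_eq_Pgt_iff vals_ne_infinity zero_mem_Pgt)
qed

lemma in_v_mult:
  assumes f: "v f \<noteq> \<infinity>" and g: "v g \<noteq> \<infinity>"
  shows "gr_mult v (in_v v f) (in_v v g) = in_v v (f * g)"
proof
  fix \<gamma>
  have fin: "\<bar>v f\<bar> \<noteq> \<infinity>" "\<bar>v g\<bar> \<noteq> \<infinity>"
    using f g valuation_ne_minf by auto
  define r where "r = rep (in_v v f (v f))"
  define s where "s = rep (in_v v g (v g))"
  have r: "r - f \<in> Pgt v (v f)" and s: "s - g \<in> Pgt v (v g)"
    using f g unfolding r_def s_def by (auto simp: in_v_def vals_def rep_cls_diff)
  have "r \<in> Pge v (v f)"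
    using add_mem_Pge[of "r - f" "v f" f] r by (simp add: Pge_def Pgt_def)
  then have "r * (s - g) + g * (r - f) \<in> Pgt v (v f + v g)"
    using mult_mem_Pgt[of "v f" r "s - g" "v g"] mult_mem_Pgt[of "v g" g "r - f" "v f"] fin r s
    by (intro add_mem_Pgt) (auto simp: Pge_def add.commute)
  then have rs: "r * s - f * g \<in> Pgt v (v f + v g)"
    by (simp add: algebra_simps)
  show "gr_mult v (in_v v f) (in_v v g) \<gamma> = in_v v (f * g) \<gamma>"
  proof (cases "\<gamma> = v f + v g")
    case True
    then have "{(\<alpha>, \<beta>). \<alpha> \<in> {v f} \<and> \<beta> \<in> {v g} \<and> \<alpha> + \<beta> = \<gamma>} = {(v f, v g)}"
      by auto
    moreover have \<gamma>: "v f + v g \<in> vals v" "\<gamma> = v f + v g"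
      using True fin unfolding vals_def by (auto intro!: exI[of _ "f * g"] simp: valuation_mult)
    ultimately have "gr_mult v (in_v v f) (in_v v g) \<gamma> = cls v \<gamma> (r * s)"
      by (simp add: gr_mult_def gr_supp_in_v f g r_def s_def)
    also have "\<dots> = cls v \<gamma> (f * g)"
      using \<gamma> rs cls_eq_iff[OF vals_ne_infinity[OF \<gamma>(1)]] by simp
    finally show ?thesis
      using \<gamma> by (simp add: in_v_def valuation_mult)
  next
    case False
    then have no_pairs: "{(\<alpha>, \<beta>). \<alpha> = v f \<and> \<beta> = v g \<and> \<alpha> + \<beta> = \<gamma>} = {}"
      by auto
    show ?thesis
      using False by (simp add: gr_mult_def gr_supp_in_v f g no_pairs) (simp add: in_v_def valuation_mult)
  qed
qed

lemma valuation_power_ne_infinity: "v f \<noteq> \<infinity> \<Longrightarrow> v (f ^ n) \<noteq> \<infinity>"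
  using val valuation_ne_minf
  by (induction n) (auto simp: valuation_def valuation_mult)

lemma in_v_power_mem_gen_alg:
  assumes "v f \<noteq> \<infinity>" "f \<in> S"
  shows "in_v v (f ^ n) \<in> gen_alg v (in_v v ` S)"
proof (induction n)
  case 0
  then show ?case
    using val gen_alg.one by (simp add: in_v_eq_gr_homog gr_one_eq_gr_homog valuation_def)
next
  case (Suc n)
  then show ?case
    using gen_alg.mult[OF gen_alg.gen[of "in_v v f"] Suc] assms
    by (simp add: in_v_mult valuation_power_ne_infinity)
qed

lemma gr_smult_homog:
  assumes "centered v"
  shows "gr_smult v c (gr_homog v \<gamma> f) = gr_homog v \<gamma> (c * f)"
proof
  fix \<delta>
  show "gr_smult v c (gr_homog v \<gamma> f) \<delta> = gr_homog v \<gamma> (c * f) \<delta>"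
  proof (cases "\<delta> \<in> vals v")
    case True
    define a where "a = (if \<delta> = \<gamma> then f else 0)"
    have "c * (rep (cls v \<delta> a) - a) \<in> Pgt v (0 + \<delta>)"
      using assms True
      by (intro mult_mem_Pgt rep_cls_diff) (auto simp: centered_def Pge_def vals_ne_infinity)
    then have "cls v \<delta> (c * rep (cls v \<delta> a)) = cls v \<delta> (c * a)"
      using True by (simp add: cls_eq_iff vals_ne_infinity right_diff_distrib)
    then show ?thesis
      using True by (simp add: gr_smult_def gr_homog_def a_def[symmetric]) (simp add: a_def)
  qed (simp add: gr_smult_def gr_homog_def)
qed

end


section \<open>The valuation \<open>\<nu>\<close>\<close>

lemma map_poly_fps_of_poly_add:
  "map_poly fps_of_poly (p + q) = map_poly fps_of_poly p + map_poly fps_of_poly q"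
  by (intro poly_eqI) (simp add: coeff_map_poly fps_of_poly_add)

lemma map_poly_fps_of_poly_uminus: "map_poly fps_of_poly (- p) = - map_poly fps_of_poly p"
  by (intro poly_eqI) (simp add: coeff_map_poly fps_of_poly_uminus)

lemma map_poly_fps_of_poly_mult:
  "map_poly fps_of_poly (p * q) = map_poly fps_of_poly p * map_poly fps_of_poly q"
  by (intro poly_eqI) (simp add: coeff_map_poly coeff_mult fps_of_poly_sum fps_of_poly_mult)

lemma subst_xy_add: "subst_xy (p + q) = subst_xy p + subst_xy q"
  by (simp add: subst_xy_def map_poly_fps_of_poly_add)

lemma subst_xy_diff: "subst_xy (p - q) = subst_xy p - subst_xy q"
  using subst_xy_add[of p "- q"]
  by (simp add: subst_xy_def map_poly_fps_of_poly_uminus)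

lemma subst_xy_mult: "subst_xy (p * q) = subst_xy p * subst_xy q"
  by (simp add: subst_xy_def map_poly_fps_of_poly_mult)

lemma subst_xy_1 [simp]: "subst_xy 1 = 1"
  by (simp add: subst_xy_def)

lemma subst_xy_power: "subst_xy (p ^ n) = subst_xy p ^ n"
  by (induction n) (simp_all add: subst_xy_mult)

lemma subst_xy_const [simp]: "subst_xy [:[:c:]:] = fps_const c"
  by (simp add: subst_xy_def fps_of_poly_const map_poly_pCons)

lemma subst_xy_var_x [simp]: "subst_xy var_x = fps_X"
  by (simp add: subst_xy_def map_poly_pCons)

lemma subst_xy_var_y [simp]: "subst_xy [:0, 1:] = sq_series"
  by (simp add: subst_xy_def map_poly_pCons)

lemma nu_ge_iff: "ereal (real n) \<le> nu p \<longleftrightarrow> (\<forall>i<n. subst_xy p $ i = 0)"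
proof (cases "subst_xy p = 0")
  case False
  then have "n \<le> subdegree (subst_xy p) \<longleftrightarrow> (\<forall>i<n. subst_xy p $ i = 0)"
    by (meson leI less_le_trans nth_less_subdegree_zero nth_subdegree_nonzero subdegree_geI)
  then show ?thesis
    using False by (simp add: nu_def)
qed (simp add: nu_def)

lemma nu_cases:
  obtains "nu p = \<infinity>" | m where "nu p = ereal (real m)"
  by (cases "subst_xy p = 0") (auto simp: nu_def)

lemma nu_gt_iff: "ereal (real n) < nu p \<longleftrightarrow> ereal (real (Suc n)) \<le> nu p"
  by (cases rule: nu_cases[of p]) auto

lemma valuation_nu: "valuation nu"
  unfolding valuation_def
proof (intro conjI allI)
  fix f g :: "'a::field poly poly"
  show "nu (f * g) = nu f + nu g"
    by (cases "subst_xy f = 0"; cases "subst_xy g = 0") (simp_all add: nu_def subst_xy_mult)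
  show "min (nu f) (nu g) \<le> nu (f + g)"
  proof (cases "subst_xy f = 0 \<or> subst_xy g = 0 \<or> subst_xy (f + g) = 0")
    case True
    then show ?thesis
      by (auto simp: nu_def subst_xy_add)
  next
    case False
    then have "min (subdegree (subst_xy f)) (subdegree (subst_xy g)) \<le> subdegree (subst_xy (f + g))"
      using subdegree_add_ge'[of "subst_xy f" "subst_xy g"] by (simp add: subst_xy_add)
    then show ?thesis
      using False by (simp add: nu_def min_def split: if_splits)
  qed
qed (simp_all add: nu_def subst_xy_def)

lemma centered_nu: "centered nu"
  by (simp add: centered_def nu_def)

lemma nu_var_x_power: "nu (var_x ^ n) = ereal (real n)"
  by (simp add: nu_def subst_xy_power)

lemma vals_nu: "vals (nu :: 'a::field poly poly \<Rightarrow> ereal) = range (\<lambda>n. ereal (real n))"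
proof (intro equalityI subsetI)
  fix \<gamma> assume "\<gamma> \<in> vals (nu :: 'a poly poly \<Rightarrow> ereal)"
  then obtain f :: "'a poly poly" where "nu f = \<gamma>" "\<gamma> \<noteq> \<infinity>"
    by (auto simp: vals_def)
  then show "\<gamma> \<in> range (\<lambda>n. ereal (real n))"
    by (cases rule: nu_cases[of f]) auto
next
  fix \<gamma> assume "\<gamma> \<in> range (\<lambda>n. ereal (real n))"
  then obtain n where "\<gamma> = ereal (real n)"
    by blast
  then show "\<gamma> \<in> vals (nu :: 'a poly poly \<Rightarrow> ereal)"
    using nu_var_x_power[where 'a = 'a, of n] unfolding vals_def by auto
qed

lemma nu_sub_leading_term:
  assumes "ereal (real n) \<le> nu g"
  shows "ereal (real n) < nu (g - [:[:subst_xy g $ n:]:] * var_x ^ n)"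
proof -
  have "subst_xy (g - [:[:subst_xy g $ n:]:] * var_x ^ n)
      = subst_xy g - fps_const (subst_xy g $ n) * fps_X ^ n"
    by (simp only: subst_xy_diff subst_xy_mult subst_xy_const subst_xy_power subst_xy_var_x)
  then show ?thesis
    using assms unfolding nu_gt_iff nu_ge_iff by (auto simp: fps_X_power_nth less_Suc_eq)
qed

lemma gr_homog_nu_mem_gen_alg:
  assumes "\<gamma> \<in> vals nu" and g: "g \<in> Pge nu \<gamma>"
  shows "gr_homog nu \<gamma> g \<in> gen_alg nu (in_v nu ` {var_x})"
proof -
  obtain n where \<gamma>: "\<gamma> = ereal (real n)"
    using assms(1) by (auto simp: vals_nu)
  define c where "c = subst_xy g $ n"
  have "gr_homog nu \<gamma> g = gr_homog nu \<gamma> ([:[:c:]:] * var_x ^ n)"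
    using nu_sub_leading_term[of n g] g \<gamma>
    by (intro gr_homog_cong[OF valuation_nu]) (simp add: Pge_def Pgt_def c_def)
  also have "\<dots> = gr_smult nu [:[:c:]:] (in_v nu (var_x ^ n))"
    by (simp add: gr_smult_homog[OF valuation_nu centered_nu] in_v_eq_gr_homog nu_var_x_power \<gamma>)
  also have "\<dots> \<in> gen_alg nu (in_v nu ` {var_x})"
    by (intro gen_alg.smult in_v_power_mem_gen_alg[OF valuation_nu]) (simp_all add: nu_def)
  finally show ?thesis .
qed

lemma GS3_nu: "GS3 nu {var_x}"
  unfolding GS3_def
  by (rule gr_carrier_subset_gen_alg[OF valuation_nu gr_homog_nu_mem_gen_alg])

lemma dvd_gen_ideal: "(\<And>s. s \<in> S \<Longrightarrow> d dvd s) \<Longrightarrow> x \<in> gen_ideal S \<Longrightarrow> d dvd x"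
  unfolding gen_ideal_def by (auto intro!: dvd_sum dvd_mult)

lemma Qmonomials_singleton: "Qmonomials {q} \<subseteq> range (\<lambda>k. q ^ k)"
proof
  fix m assume "m \<in> Qmonomials {q}"
  then obtain lam :: "'a \<Rightarrow> nat" where m: "m = (\<Prod>p\<in>{p. lam p \<noteq> 0}. p ^ lam p)"
    and supp: "{p. lam p \<noteq> 0} \<subseteq> {q}"
    by (auto simp: Qmonomials_def)
  then have "{p. lam p \<noteq> 0} = (if lam q = 0 then {} else {q})"
    by auto
  then show "m \<in> range (\<lambda>k. q ^ k)"
    using m by (cases "lam q = 0") (auto intro: range_eqI[of _ _ 0])
qed

lemma nu_var_y_minus_var_x: "ereal (real 2) \<le> nu ([:0, 1:] - var_x)"
proof -
  have "\<exists>i::nat. 1 = i ^ 2"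
    by (rule exI[of _ 1]) simp
  moreover have "subst_xy ([:0, 1:] - var_x :: 'a::field poly poly) = sq_series - fps_X"
    by (simp only: subst_xy_diff subst_xy_var_y subst_xy_var_x)
  ultimately show ?thesis
    unfolding nu_ge_iff by (auto simp: sq_series_def less_2_cases_iff)
qed

lemma not_var_x_dvd_var_y: "\<not> var_x dvd ([:0, 1:] :: 'a::field poly poly)"
proof
  assume "var_x dvd ([:0, 1:] :: 'a poly poly)"
  then have "[:0, 1 :: 'a:] dvd 1"
    using const_poly_dvd_iff[of "[:0, 1:]" "[:0, 1:] :: 'a poly poly"]
    by (metis coeff_pCons_Suc one_pCons coeff_pCons_0)
  then show False
    using is_unit_iff_degree[of "[:0, 1 :: 'a:]"] by simp
qed

lemma not_GS2_nu: "\<not> GS2 (nu :: 'a::field poly poly \<Rightarrow> ereal) {var_x}"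
proof
  assume "GS2 (nu :: 'a poly poly \<Rightarrow> ereal) {var_x}"
  moreover have "ereal (real 2) \<in> vals (nu :: 'a poly poly \<Rightarrow> ereal)"
    unfolding vals_nu by (rule rangeI)
  ultimately have mem:
    "[:0, 1:] - var_x \<in> gen_ideal {m \<in> Qmonomials {var_x :: 'a poly poly}. ereal (real 2) \<le> nu m}"
    using nu_var_y_minus_var_x unfolding GS2_def Pge_def by blast
  have "var_x dvd m" if m: "m \<in> {m \<in> Qmonomials {var_x}. ereal (real 2) \<le> nu m}" for m :: "'a poly poly"
  proof -
    obtain k where k: "m = var_x ^ k"
      using m Qmonomials_singleton[of var_x] by force
    then have "k \<noteq> 0"
      using m nu_var_x_power[where 'a = 'a, of k] by auto
    then show ?thesis
      using k by (simp add: dvd_power)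
  qed
  then have "var_x dvd ([:0, 1:] - var_x :: 'a poly poly)"
    using mem by (rule dvd_gen_ideal)
  from dvd_add[OF this dvd_refl] show False
    using not_var_x_dvd_var_y[where 'a = 'a] by simp
qed

theorem mainTheorem2:
  "valuation (nu :: 'a::field poly poly \<Rightarrow> ereal) \<and> centered (nu :: 'a poly poly \<Rightarrow> ereal)
   \<and> GS3 (nu :: 'a poly poly \<Rightarrow> ereal) {var_x} \<and> \<not> GS2 (nu :: 'a poly poly \<Rightarrow> ereal) {var_x}"
  using valuation_nu centered_nu GS3_nu not_GS2_nu by blast

end
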